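(* Let $q_1,q_2\in[1,\infty]$ and $\alpha_1,\alpha_2\ge0$ satisfy $1=\frac1{q_1}+\frac1{q_2}$, and set $\alpha=\frac{\alpha_1}{q_1}+\frac{\alpha_2}{q_2}$ (with $1/\infty=0$). Then $$\|f_1f_2\|_{\mathfrak L^{1,\infty}(\log\mathfrak L)^\alpha}\le\|f_1\|_{\mathfrak L^{q_1,\infty}(\log\mathfrak L)^{\alpha_1}}\|f_2\|_{\mathfrak L^{q_2,\infty}(\log\mathfrak L)^{\alpha_2}}$$ for all $f_1\in\mathfrak L^{q_1,\infty}(\log\mathfrak L)^{\alpha_1}$, $f_2\in\mathfrak L^{q_2,\infty}(\log\mathfrak L)^{\alpha_2}$. Furthermore, $$|||\tilde f_1\tilde f_2|||_{1,\alpha;\rho}\le|||\tilde f_1|||_{q_1,\alpha_1;\rho}\,|||\tilde f_2|||_{q_2,\alpha_2;\rho}$$ for all $\tilde f_1\in\mathfrak L^{q_1,\infty}_{\rm ul}(\log\mathfrak L)^{\alpha_1}$, $\tilde f_2\in\mathfrak L^{q_2,\infty}_{\rm ul}(\log\mathfrak L)^{\alpha_2}$ and $\rho>0$.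
   Context: For $q\in[1,\infty)$, $\alpha\ge0$ and $f\in L^1_{\rm loc}(\mathbb R^n)$, $\|f\|_{\mathfrak L^{q,\infty}(\log\mathfrak L)^\alpha}:=\sup_{s>0}\{[\log(e+1/s)]^\alpha\sup_{|E|=s}\int_E|f|^q\,dx\}^{1/q}$ (inner sup over measurable $E$ with $|E|=s$); for $q=\infty$ it is $\|f\|_{L^\infty}$. $\mathfrak L^{q,\infty}(\log\mathfrak L)^\alpha$ is the set of $f\in L^1_{\rm loc}$ with finite norm. For $\rho>0$, $|||f|||_{q,\alpha;\rho}:=\sup_{z\in\mathbb R^n}\|f\chi_{B(z,\rho)}\|_{\mathfrak L^{q,\infty}(\log\mathfrak L)^\alpha}$; $\mathfrak L^{q,\infty}_{\rm ul}(\log\mathfrak L)^\alpha$ is the set of $f\in L^1_{\rm loc}$ with $|||f|||_{q,\alpha;1}<\infty$. *)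

theory Defs
  imports "HOL-Analysis.Analysis" "HOL-Probability.Essential_Supremum"
begin

text \<open>Exponents q in [1,\<infinity>] are represented as extended nonnegative reals;
  the reciprocal 1/q is taken in ennreal, so 1/\<infinity> = 0.\<close>
definition inv_exp :: "ennreal \<Rightarrow> real" where
  "inv_exp q = enn2real (1 / q)"

text \<open>Real power on [0,\<infinity>] with \<infinity>^p = \<infinity> (used only for p > 0).\<close>
definition epow :: "ennreal \<Rightarrow> real \<Rightarrow> ennreal" where
  "epow x p = (if x = \<infinity> then \<infinity> else ennreal (enn2real x powr p))"

definition loc_integrable :: "('a::euclidean_space \<Rightarrow> real) \<Rightarrow> bool" where
  "loc_integrable f \<longleftrightarrow> (\<forall>K. compact K \<longrightarrow> set_integrable lebesgue K f)"

definition LlogL_norm :: "ennreal \<Rightarrow> real \<Rightarrow> ('a::euclidean_space \<Rightarrow> real) \<Rightarrow> ennreal" where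
  "LlogL_norm q \<alpha> f =
    (if q = \<infinity> then esssup lebesgue (\<lambda>x. ennreal \<bar>f x\<bar>)
     else epow
       (SUP s\<in>{0<..}. ennreal (ln (exp 1 + 1 / s) powr \<alpha>) *
          (SUP E\<in>{E \<in> sets lebesgue. emeasure lebesgue E = ennreal s}.
              (\<integral>\<^sup>+ x\<in>E. ennreal (\<bar>f x\<bar> powr enn2real q) \<partial>lebesgue)))
       (1 / enn2real q))"

definition LlogL_space :: "ennreal \<Rightarrow> real \<Rightarrow> ('a::euclidean_space \<Rightarrow> real) set" where
  "LlogL_space q \<alpha> = {f. loc_integrable f \<and> LlogL_norm q \<alpha> f < \<infinity>}"

definition ul_norm :: "ennreal \<Rightarrow> real \<Rightarrow> real \<Rightarrow> ('a::euclidean_space \<Rightarrow> real) \<Rightarrow> ennreal" where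
  "ul_norm q \<alpha> \<rho> f = (SUP z. LlogL_norm q \<alpha> (\<lambda>x. indicator (ball z \<rho>) x * f x))"

definition ul_space :: "ennreal \<Rightarrow> real \<Rightarrow> ('a::euclidean_space \<Rightarrow> real) set" where
  "ul_space q \<alpha> = {f. loc_integrable f \<and> ul_norm q \<alpha> 1 f < \<infinity>}"

end

theory Submission
  imports Defs
begin

text \<open>On a set E of measure s, Hoelder's inequality bounds the integral of |f1 f2| over E by
  (\<integral>_E |f1|^q1)^(1/q1) (\<integral>_E |f2|^q2)^(1/q2), and the logarithmic weight
  w(s) = log(e + 1/s) splits as w(s)^\<alpha> = (w(s)^\<alpha>1)^(1/q1) (w(s)^\<alpha>2)^(1/q2). Hence each
  weighted integral of |f1 f2| is dominated by the product of the two suprema defining the norms of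
  f1 and f2. If one exponent is \<infinity>, Hoelder is replaced by the essential supremum bound. The
  uniformly local inequality is the first one applied to the truncations to each ball B, since
  \<chi>_B f1 f2 = (\<chi>_B f1)(\<chi>_B f2).\<close>

lemma epow_one: "epow x 1 = x"
  by (cases x) (auto simp: epow_def)

lemma epow_mono:
  assumes "x \<le> y" "0 < r"
  shows "epow x r \<le> epow y r"
proof (cases "y = \<infinity>")
  case False
  with assms(1) have "x \<noteq> \<infinity>" "enn2real x \<le> enn2real y"
    by (auto simp: top.extremum_unique enn2real_mono top.not_eq_extremum)
  with False assms(2) show ?thesis
    by (auto simp: epow_def intro!: ennreal_leI powr_mono2)
qed (simp add: epow_def)

lemma epow_cmult:
  assumes "0 < c" "0 < r"
  shows "ennreal (c powr r) * epow A r = epow (ennreal c * A) r"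
proof (cases A)
  case (real a)
  with assms show ?thesis
    by (simp add: epow_def powr_mult ennreal_mult[symmetric])
qed (use assms in \<open>simp add: epow_def ennreal_mult_top\<close>)

lemma epow_eq_0_iff: "0 < r \<Longrightarrow> epow x r = 0 \<longleftrightarrow> x = 0"
  by (cases x) (auto simp: epow_def)

lemma Youngs_inequality_scaled:
  fixes p q a b x y :: real
  assumes p: "p > 1" and q: "q > 1" and pq: "1/p + 1/q = 1"
    and "0 < a" "0 < b" "0 \<le> x" "0 \<le> y"
  shows "x * y \<le> a powr (1/p) * b powr (1/q) * (x powr p / (p * a) + y powr q / (q * b))"
proof -
  define C where "C = a powr (1/p) * b powr (1/q)"
  have "C > 0" using assms by (simp add: C_def)
  have "(x / a powr (1/p)) powr p = x powr p / a" "(y / b powr (1/q)) powr q = y powr q / b"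
    using assms by (simp_all add: powr_divide powr_powr)
  then have "(x / a powr (1/p)) * (y / b powr (1/q)) \<le> x powr p / (p * a) + y powr q / (q * b)"
    using Youngs_inequality[OF p q pq, of "x / a powr (1/p)" "y / b powr (1/q)"] assms
    by (simp add: mult.commute)
  then have "x * y / C \<le> x powr p / (p * a) + y powr q / (q * b)"
    by (simp add: C_def)
  with \<open>C > 0\<close> show ?thesis
    by (simp add: C_def pos_divide_le_eq mult.commute)
qed

lemma nn_integral_Hoelder:
  fixes f g :: "'b \<Rightarrow> real"
  assumes p: "p > 1" and q: "q > 1" and pq: "1/p + 1/q = 1"
    and [measurable]: "f \<in> borel_measurable M" "g \<in> borel_measurable M"
    and f0: "\<And>x. 0 \<le> f x" and g0: "\<And>x. 0 \<le> g x"
  shows "(\<integral>\<^sup>+x. ennreal (f x * g x) \<partial>M)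
    \<le> epow (\<integral>\<^sup>+x. ennreal (f x powr p) \<partial>M) (1/p) * epow (\<integral>\<^sup>+x. ennreal (g x powr q) \<partial>M) (1/q)"
proof -
  define A where "A = (\<integral>\<^sup>+x. ennreal (f x powr p) \<partial>M)"
  define B where "B = (\<integral>\<^sup>+x. ennreal (g x powr q) \<partial>M)"
  consider "A = 0 \<or> B = 0" | "A \<noteq> 0" "B \<noteq> 0" "A = \<infinity> \<or> B = \<infinity>"
    | a b where "A = ennreal a" "B = ennreal b" "0 < a" "0 < b"
    by (cases A; cases B) (auto simp: less_le)
  then show ?thesis
  proof cases
    case 1
    then have "(AE x in M. f x = 0) \<or> (AE x in M. g x = 0)"
      using p q f0 g0 by (simp add: A_def B_def nn_integral_0_iff_AE)
    then have "AE x in M. ennreal (f x * g x) = 0"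
      by (auto elim!: eventually_mono)
    then have "(\<integral>\<^sup>+x. ennreal (f x * g x) \<partial>M) = 0"
      by (simp add: nn_integral_0_iff_AE)
    then show ?thesis by simp
  next
    case 2
    have "epow A (1/p) \<noteq> 0" "epow B (1/q) \<noteq> 0"
      using 2 p q by (simp_all add: epow_eq_0_iff)
    moreover have "epow A (1/p) = \<infinity> \<or> epow B (1/q) = \<infinity>"
      using 2 by (auto simp: epow_def)
    ultimately have "epow A (1/p) * epow B (1/q) = \<infinity>"
      by (elim disjE) (simp_all add: ennreal_mult_eq_top_iff)
    then show ?thesis by (simp add: A_def B_def)
  next
    case 3
    define C where "C = a powr (1/p) * b powr (1/q)"
    define c1 where "c1 = C / (p * a)"
    define c2 where "c2 = C / (q * b)"
    have c: "0 \<le> c1" "0 \<le> c2"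
      using 3 p q by (simp_all add: c1_def c2_def C_def)
    have "ennreal (f x * g x) \<le> ennreal c1 * ennreal (f x powr p) + ennreal c2 * ennreal (g x powr q)"
      for x
    proof -
      have "f x * g x \<le> C * (f x powr p / (p * a) + g x powr q / (q * b))"
        using Youngs_inequality_scaled[OF p q pq \<open>0 < a\<close> \<open>0 < b\<close> f0 g0] by (simp add: C_def)
      also have "\<dots> = c1 * f x powr p + c2 * g x powr q"
        by (simp add: c1_def c2_def distrib_left)
      finally have "ennreal (f x * g x) \<le> ennreal (c1 * f x powr p + c2 * g x powr q)"
        by (rule ennreal_leI)
      with c show ?thesis
        by (simp add: ennreal_plus ennreal_mult)
    qed
    then have "(\<integral>\<^sup>+x. ennreal (f x * g x) \<partial>M)
        \<le> (\<integral>\<^sup>+x. ennreal c1 * ennreal (f x powr p) + ennreal c2 * ennreal (g x powr q) \<partial>M)"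
      by (rule nn_integral_mono)
    also have "\<dots> = ennreal c1 * A + ennreal c2 * B"
      by (simp add: nn_integral_add nn_integral_cmult A_def B_def)
    also have "\<dots> = ennreal (c1 * a + c2 * b)"
      using 3 c by (simp add: ennreal_plus ennreal_mult)
    also have "c1 * a + c2 * b = C * (1/p + 1/q)"
      using 3 p q by (simp add: c1_def c2_def field_simps)
    also have "\<dots> = a powr (1/p) * b powr (1/q)"
      using pq by (simp add: C_def)
    also have "ennreal \<dots> = epow A (1/p) * epow B (1/q)"
      using 3 by (simp add: epow_def ennreal_mult)
    finally show ?thesis by (simp add: A_def B_def)
  qed
qed

definition LlogL_sup :: "real \<Rightarrow> real \<Rightarrow> ('a::euclidean_space \<Rightarrow> real) \<Rightarrow> ennreal" where
  "LlogL_sup r \<alpha> f =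
    (SUP s\<in>{0<..}. ennreal (ln (exp 1 + 1 / s) powr \<alpha>) *
       (SUP E\<in>{E \<in> sets lebesgue. emeasure lebesgue E = ennreal s}.
          (\<integral>\<^sup>+ x\<in>E. ennreal (\<bar>f x\<bar> powr r) \<partial>lebesgue)))"

lemma LlogL_norm_ennreal: "1 \<le> q \<Longrightarrow> LlogL_norm (ennreal q) \<alpha> f = epow (LlogL_sup q \<alpha> f) (1 / q)"
  by (simp add: LlogL_norm_def LlogL_sup_def)

lemma LlogL_norm_one: "LlogL_norm 1 \<alpha> f = LlogL_sup 1 \<alpha> f"
  using LlogL_norm_ennreal[of 1] by (simp add: epow_one)

lemma LlogL_norm_top: "LlogL_norm \<infinity> \<alpha> f = esssup lebesgue (\<lambda>x. ennreal \<bar>f x\<bar>)"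
  by (simp add: LlogL_norm_def)

lemma LlogL_sup_upper:
  assumes "0 < s" "E \<in> sets lebesgue" "emeasure lebesgue E = ennreal s"
  shows "ennreal (ln (exp 1 + 1 / s) powr \<alpha>) * (\<integral>\<^sup>+ x\<in>E. ennreal (\<bar>f x\<bar> powr r) \<partial>lebesgue)
    \<le> LlogL_sup r \<alpha> f"
  unfolding LlogL_sup_def using assms
  by (intro SUP_upper2[of s] mult_left_mono SUP_upper) auto

lemma LlogL_sup_least:
  assumes "\<And>s E. 0 < s \<Longrightarrow> E \<in> sets lebesgue \<Longrightarrow> emeasure lebesgue E = ennreal s \<Longrightarrow>
    ennreal (ln (exp 1 + 1 / s) powr \<alpha>) * (\<integral>\<^sup>+ x\<in>E. ennreal (\<bar>f x\<bar> powr r) \<partial>lebesgue) \<le> B"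
  shows "LlogL_sup r \<alpha> f \<le> B"
  unfolding LlogL_sup_def SUP_mult_left_ennreal using assms
  by (intro SUP_least) auto

lemma LlogL_norm_mult_le_Hoelder:
  fixes f1 f2 :: "'a::euclidean_space \<Rightarrow> real"
  assumes p: "p > 1" and q: "q > 1" and pq: "1/p + 1/q = 1"
    and [measurable]: "f1 \<in> borel_measurable lebesgue" "f2 \<in> borel_measurable lebesgue"
  shows "LlogL_norm 1 (\<alpha>1 / p + \<alpha>2 / q) (\<lambda>x. f1 x * f2 x)
    \<le> LlogL_norm (ennreal p) \<alpha>1 f1 * LlogL_norm (ennreal q) \<alpha>2 f2"
  unfolding LlogL_norm_one LlogL_norm_ennreal[OF less_imp_le[OF p]] LlogL_norm_ennreal[OF less_imp_le[OF q]]
proof (rule LlogL_sup_least)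
  fix s :: real and E :: "'a set"
  assume s: "0 < s" and E[measurable]: "E \<in> sets lebesgue" and sE: "emeasure lebesgue E = ennreal s"
  define L where "L = ln (exp 1 + 1 / s)"
  define A where "A = (\<integral>\<^sup>+ x\<in>E. ennreal (\<bar>f1 x\<bar> powr p) \<partial>lebesgue)"
  define B where "B = (\<integral>\<^sup>+ x\<in>E. ennreal (\<bar>f2 x\<bar> powr q) \<partial>lebesgue)"
  have "1 < exp (1::real)" "0 < 1 / s"
    using s by simp_all
  then have "0 < L"
    unfolding L_def by (intro ln_gt_zero) linarith
  have "(\<integral>\<^sup>+ x\<in>E. ennreal (\<bar>f1 x * f2 x\<bar>) \<partial>lebesgue) \<le> epow A (1/p) * epow B (1/q)"
    using nn_integral_Hoelder[OF p q pq, of "\<lambda>x. \<bar>f1 x\<bar>" "restrict_space lebesgue E" "\<lambda>x. \<bar>f2 x\<bar>"]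
    by (simp add: A_def B_def nn_integral_restrict_space measurable_restrict_space1 abs_mult)
  then have "ennreal (L powr (\<alpha>1 / p + \<alpha>2 / q)) * (\<integral>\<^sup>+ x\<in>E. ennreal (\<bar>f1 x * f2 x\<bar> powr 1) \<partial>lebesgue)
      \<le> ennreal (L powr (\<alpha>1 / p + \<alpha>2 / q)) * (epow A (1/p) * epow B (1/q))"
    by (simp add: mult_left_mono)
  also have "\<dots> = (ennreal ((L powr \<alpha>1) powr (1/p)) * epow A (1/p)) *
      (ennreal ((L powr \<alpha>2) powr (1/q)) * epow B (1/q))"
    by (simp add: powr_powr powr_add ennreal_mult ac_simps)
  also have "\<dots> = epow (ennreal (L powr \<alpha>1) * A) (1/p) * epow (ennreal (L powr \<alpha>2) * B) (1/q)"
    using \<open>0 < L\<close> p q by (simp add: epow_cmult)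
  also have "\<dots> \<le> epow (LlogL_sup p \<alpha>1 f1) (1/p) * epow (LlogL_sup q \<alpha>2 f2) (1/q)"
    using p q LlogL_sup_upper[OF s E sE]
    by (intro mult_mono epow_mono) (simp_all add: L_def A_def B_def)
  finally show "ennreal (ln (exp 1 + 1 / s) powr (\<alpha>1 / p + \<alpha>2 / q)) *
      (\<integral>\<^sup>+ x\<in>E. ennreal (\<bar>f1 x * f2 x\<bar> powr 1) \<partial>lebesgue) \<le> \<dots>"
    by (simp add: L_def)
qed

lemma LlogL_norm_mult_le_esssup:
  fixes f1 f2 :: "'a::euclidean_space \<Rightarrow> real"
  assumes [measurable]: "f2 \<in> borel_measurable lebesgue"
  shows "LlogL_norm 1 \<alpha> (\<lambda>x. f1 x * f2 x) \<le> LlogL_norm \<infinity> \<alpha>1 f1 * LlogL_norm 1 \<alpha> f2"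
proof -
  define M where "M = esssup lebesgue (\<lambda>x. ennreal \<bar>f1 x\<bar>)"
  have M: "AE x in lebesgue. ennreal \<bar>f1 x\<bar> \<le> M"
    unfolding M_def by (rule esssup_AE)
  have "LlogL_sup 1 \<alpha> (\<lambda>x. f1 x * f2 x) \<le> M * LlogL_sup 1 \<alpha> f2"
  proof (rule LlogL_sup_least)
    fix s :: real and E :: "'a set"
    assume s: "0 < s" and E[measurable]: "E \<in> sets lebesgue" and sE: "emeasure lebesgue E = ennreal s"
    define w where "w = ennreal (ln (exp 1 + 1 / s) powr \<alpha>)"
    have "(\<integral>\<^sup>+ x\<in>E. ennreal (\<bar>f1 x * f2 x\<bar> powr 1) \<partial>lebesgue) \<le> (\<integral>\<^sup>+ x\<in>E. M * ennreal \<bar>f2 x\<bar> \<partial>lebesgue)"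
      using M
      by (intro nn_integral_mono_AE) (auto elim!: eventually_mono intro!: mult_right_mono
          simp: abs_mult ennreal_mult indicator_def)
    also have "\<dots> = M * (\<integral>\<^sup>+ x\<in>E. ennreal (\<bar>f2 x\<bar> powr 1) \<partial>lebesgue)"
      by (simp add: nn_integral_cmult[symmetric] ac_simps)
    finally have "w * (\<integral>\<^sup>+ x\<in>E. ennreal (\<bar>f1 x * f2 x\<bar> powr 1) \<partial>lebesgue)
        \<le> w * (M * (\<integral>\<^sup>+ x\<in>E. ennreal (\<bar>f2 x\<bar> powr 1) \<partial>lebesgue))"
      by (rule mult_left_mono) simp
    also have "\<dots> = M * (w * (\<integral>\<^sup>+ x\<in>E. ennreal (\<bar>f2 x\<bar> powr 1) \<partial>lebesgue))"
      by (simp add: ac_simps)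
    also have "\<dots> \<le> M * LlogL_sup 1 \<alpha> f2"
      unfolding w_def by (intro mult_left_mono LlogL_sup_upper[OF s E sE]) simp
    finally show "w * (\<integral>\<^sup>+ x\<in>E. ennreal (\<bar>f1 x * f2 x\<bar> powr 1) \<partial>lebesgue) \<le> M * LlogL_sup 1 \<alpha> f2" .
  qed
  then show ?thesis
    by (simp only: LlogL_norm_one LlogL_norm_top M_def)
qed

lemma inv_exp_ennreal: "0 < r \<Longrightarrow> inv_exp (ennreal r) = 1 / r"
  unfolding inv_exp_def using divide_ennreal[of 1 r] by simp

lemma inv_exp_top: "inv_exp top = 0"
  unfolding inv_exp_def by simp

lemma inv_exp_one: "inv_exp 1 = 1"
  unfolding inv_exp_def by simp

lemma conjugate_exponents_cases:
  assumes "1 \<le> q1" "1 \<le> q2" "inv_exp q1 + inv_exp q2 = 1"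
  obtains "q1 = \<infinity>" "q2 = 1"
    | "q1 = 1" "q2 = \<infinity>"
    | p q where "q1 = ennreal p" "q2 = ennreal q" "1 < p" "1 < q" "1/p + 1/q = 1"
proof (cases q1; cases q2)
  fix p q
  assume pq: "q1 = ennreal p" "q2 = ennreal q" "0 \<le> p" "0 \<le> q"
  then have bounds: "1 \<le> p" "1 \<le> q" and sum: "1/p + 1/q = 1"
    using assms by (auto simp: inv_exp_ennreal simp flip: ennreal_1)
  then consider "p = 1" | "q = 1" | "1 < p" "1 < q"
    by fastforce
  then show thesis
    using that pq sum bounds by cases auto
qed (use assms that in \<open>auto simp: inv_exp_top inv_exp_ennreal\<close>)

lemma LlogL_norm_mult_le:
  fixes f1 f2 :: "'a::euclidean_space \<Rightarrow> real"
  assumes "1 \<le> q1" "1 \<le> q2" "inv_exp q1 + inv_exp q2 = 1"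
    and \<alpha>: "\<alpha> = \<alpha>1 * inv_exp q1 + \<alpha>2 * inv_exp q2"
    and [measurable]: "f1 \<in> borel_measurable lebesgue" "f2 \<in> borel_measurable lebesgue"
  shows "LlogL_norm 1 \<alpha> (\<lambda>x. f1 x * f2 x) \<le> LlogL_norm q1 \<alpha>1 f1 * LlogL_norm q2 \<alpha>2 f2"
  using assms(1-3)
proof (cases rule: conjugate_exponents_cases)
  case 1
  then show ?thesis
    using LlogL_norm_mult_le_esssup[of f2 \<alpha> f1 \<alpha>1] \<alpha> by (simp add: inv_exp_top inv_exp_one)
next
  case 2
  then show ?thesis
    using LlogL_norm_mult_le_esssup[of f1 \<alpha> f2 \<alpha>2] \<alpha> by (simp add: inv_exp_top inv_exp_one mult.commute)
next
  case (3 p q)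
  then show ?thesis
    using LlogL_norm_mult_le_Hoelder[of p q f1 f2 \<alpha>1 \<alpha>2] \<alpha> by (simp add: inv_exp_ennreal)
qed

lemma ul_norm_mult_le:
  fixes g1 g2 :: "'a::euclidean_space \<Rightarrow> real"
  assumes "1 \<le> q1" "1 \<le> q2" "inv_exp q1 + inv_exp q2 = 1"
    and "\<alpha> = \<alpha>1 * inv_exp q1 + \<alpha>2 * inv_exp q2"
    and [measurable]: "g1 \<in> borel_measurable lebesgue" "g2 \<in> borel_measurable lebesgue"
  shows "ul_norm 1 \<alpha> \<rho> (\<lambda>x. g1 x * g2 x) \<le> ul_norm q1 \<alpha>1 \<rho> g1 * ul_norm q2 \<alpha>2 \<rho> g2"
  unfolding ul_norm_def
proof (rule SUP_least)
  fix z :: 'a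
  let ?loc = "\<lambda>g x. indicator (ball z \<rho>) x * g x"
  have "ball z \<rho> \<in> sets lebesgue"
    by simp
  then have "?loc g1 \<in> borel_measurable lebesgue" "?loc g2 \<in> borel_measurable lebesgue"
    by measurable
  moreover have "?loc (\<lambda>x. g1 x * g2 x) = (\<lambda>x. ?loc g1 x * ?loc g2 x)"
    by (auto simp: indicator_def fun_eq_iff)
  ultimately have "LlogL_norm 1 \<alpha> (?loc (\<lambda>x. g1 x * g2 x)) \<le> LlogL_norm q1 \<alpha>1 (?loc g1) * LlogL_norm q2 \<alpha>2 (?loc g2)"
    using LlogL_norm_mult_le[OF assms(1-4)] by simp
  also have "\<dots> \<le> (SUP z. LlogL_norm q1 \<alpha>1 (\<lambda>x. indicator (ball z \<rho>) x * g1 x)) *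
      (SUP z. LlogL_norm q2 \<alpha>2 (\<lambda>x. indicator (ball z \<rho>) x * g2 x))"
    by (intro mult_mono SUP_upper) auto
  finally show "LlogL_norm 1 \<alpha> (?loc (\<lambda>x. g1 x * g2 x)) \<le> \<dots>" .
qed

lemma loc_integrable_borel_measurable:
  fixes f :: "'a::euclidean_space \<Rightarrow> real"
  assumes "loc_integrable f"
  shows "f \<in> borel_measurable lebesgue"
proof (rule borel_measurable_LIMSEQ_real)
  fix n :: nat
  have "set_integrable lebesgue (cball 0 (real n)) f"
    using assms by (simp add: loc_integrable_def)
  then show "(\<lambda>x. indicator (cball 0 (real n)) x *\<^sub>R f x) \<in> borel_measurable lebesgue"
    unfolding set_integrable_def by (rule borel_measurable_integrable)
next
  fix x :: 'a
  have "\<forall>\<^sub>F n in sequentially. indicator (cball 0 (real n)) x *\<^sub>R f x = f x"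
    using eventually_ge_at_top[of "nat \<lceil>norm x\<rceil>"]
    by eventually_elim (auto simp: indicator_def)
  then show "(\<lambda>n. indicator (cball 0 (real n)) x *\<^sub>R f x) \<longlonglongrightarrow> f x"
    by (rule tendsto_eventually)
qed

theorem lemma2p2:
  fixes q1 q2 :: ennreal and \<alpha>1 \<alpha>2 \<alpha> :: real
  assumes "1 \<le> q1" and "1 \<le> q2" and "0 \<le> \<alpha>1" and "0 \<le> \<alpha>2"
    and "inv_exp q1 + inv_exp q2 = 1"
    and "\<alpha> = \<alpha>1 * inv_exp q1 + \<alpha>2 * inv_exp q2"
  shows "(\<forall>(f1::'a::euclidean_space \<Rightarrow> real) f2. f1 \<in> LlogL_space q1 \<alpha>1 \<longrightarrow> f2 \<in> LlogL_space q2 \<alpha>2 \<longrightarrow>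
            LlogL_norm 1 \<alpha> (\<lambda>x. f1 x * f2 x) \<le> LlogL_norm q1 \<alpha>1 f1 * LlogL_norm q2 \<alpha>2 f2)
       \<and> (\<forall>(g1::'a \<Rightarrow> real) g2 \<rho>. g1 \<in> ul_space q1 \<alpha>1 \<longrightarrow> g2 \<in> ul_space q2 \<alpha>2 \<longrightarrow> 0 < \<rho> \<longrightarrow>
            ul_norm 1 \<alpha> \<rho> (\<lambda>x. g1 x * g2 x) \<le> ul_norm q1 \<alpha>1 \<rho> g1 * ul_norm q2 \<alpha>2 \<rho> g2)"
proof (intro conjI allI impI)
  fix f1 f2 :: "'a \<Rightarrow> real"
  assume "f1 \<in> LlogL_space q1 \<alpha>1" "f2 \<in> LlogL_space q2 \<alpha>2"
  then show "LlogL_norm 1 \<alpha> (\<lambda>x. f1 x * f2 x) \<le> LlogL_norm q1 \<alpha>1 f1 * LlogL_norm q2 \<alpha>2 f2"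
    by (intro LlogL_norm_mult_le[OF assms(1,2,5,6)])
      (simp_all add: LlogL_space_def loc_integrable_borel_measurable)
next
  fix g1 g2 :: "'a \<Rightarrow> real" and \<rho> :: real
  assume "g1 \<in> ul_space q1 \<alpha>1" "g2 \<in> ul_space q2 \<alpha>2"
  then show "ul_norm 1 \<alpha> \<rho> (\<lambda>x. g1 x * g2 x) \<le> ul_norm q1 \<alpha>1 \<rho> g1 * ul_norm q2 \<alpha>2 \<rho> g2"
    by (intro ul_norm_mult_le[OF assms(1,2,5,6)])
      (simp_all add: ul_space_def loc_integrable_borel_measurable)
qed

end
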